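(* Suppose that for every $c\in\{1,\dots,K-1\}$ the density $\bar p_c$ satisfies $$\bar p_c(\bm x,\bar Y)=\binom{K-1}{c}^{-1}\sum_{y\notin \bar Y}p(\bm x,y)\qquad(\bm x\in\mathcal X,\ \bar Y\in\overline{\mathcal Y}_c).$$ Let $\bm\alpha=(\alpha_1,\dots,\alpha_{K-1})$ satisfy $\alpha_c\ge 0$ and $\sum_{c=1}^{K-1}\alpha_c=1$. Define the multi-complementary risk $$R_{\mathrm{MCL}}(\bm g)=\sum_{c=1}^{K-1}\alpha_c R_c(\bm g),\qquad R_c(\bm g)=\mathbb E_{\bar p_c(\bm x,\bar Y)}\Big[\mathcal L(\bm g(\bm x))-\frac{K-1}{c}\sum_{y\in\bar Y}\ell(\bm g(\bm x),y)\Big].$$ Then for any loss $\ell$ and any decision function $\bm g$ (with finite expectations), $R_{\mathrm{MCL}}(\bm g)=R(\bm g)$.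
   Context: Let $K\ge 2$, $\mathcal X\subseteq\mathbb R^d$ the feature space and $\mathcal Y=\{1,\dots,K\}$ the label space. Let $p(\bm x,y)$ be a joint density on $\mathcal X\times\mathcal Y$ with marginal density $p(\bm x)$. For $c\in\{1,\dots,K-1\}$, $\overline{\mathcal Y}_c$ denotes the collection of all $c$-element subsets of $\{1,\dots,K\}$, and $\bar p_c(\bm x,\bar Y)$ is a density on $\mathcal X\times\overline{\mathcal Y}_c$. A decision function is a map $\bm g:\mathcal X\to\mathbb R^K$, a loss is a function $\ell:\mathbb R^K\times\mathcal Y\to[0,\infty)$, the classification risk is $R(\bm g)=\mathbb E_{p(\bm x,y)}[\ell(\bm g(\bm x),y)]$, and the cumulative loss is $\mathcal L(\bm g(\bm x))=\sum_{y=1}^K\ell(\bm g(\bm x),y)$. *)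

theory Defs
  imports "HOL-Analysis.Analysis"
begin

text \<open>Labels are 1..K (as naturals); decision values in R^K are represented as nat => real.\<close>

definition labels :: "nat \<Rightarrow> nat set" where
  "labels K = {1..K}"

definition compl_sets :: "nat \<Rightarrow> nat \<Rightarrow> nat set set" where
  "compl_sets K c = {Y. Y \<subseteq> labels K \<and> card Y = c}"

definition cum_loss :: "nat \<Rightarrow> ((nat \<Rightarrow> real) \<Rightarrow> nat \<Rightarrow> real) \<Rightarrow> (nat \<Rightarrow> real) \<Rightarrow> real" where
  "cum_loss K loss v = (\<Sum>y\<in>labels K. loss v y)"

definition class_risk :: "nat \<Rightarrow> 'a::euclidean_space set \<Rightarrow> ('a \<Rightarrow> nat \<Rightarrow> real)
    \<Rightarrow> ((nat \<Rightarrow> real) \<Rightarrow> nat \<Rightarrow> real) \<Rightarrow> ('a \<Rightarrow> (nat \<Rightarrow> real)) \<Rightarrow> real" where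
  "class_risk K X p loss g = (LINT x:X|lborel. (\<Sum>y\<in>labels K. loss (g x) y * p x y))"

definition Rc_integrand :: "nat \<Rightarrow> nat \<Rightarrow> ('a \<Rightarrow> nat set \<Rightarrow> real)
    \<Rightarrow> ((nat \<Rightarrow> real) \<Rightarrow> nat \<Rightarrow> real) \<Rightarrow> ('a \<Rightarrow> (nat \<Rightarrow> real)) \<Rightarrow> 'a \<Rightarrow> real" where
  "Rc_integrand K c pc loss g x =
     (\<Sum>Y\<in>compl_sets K c.
        (cum_loss K loss (g x) - (real (K - 1) / real c) * (\<Sum>y\<in>Y. loss (g x) y)) * pc x Y)"

definition comp_risk_c :: "nat \<Rightarrow> nat \<Rightarrow> 'a::euclidean_space set \<Rightarrow> ('a \<Rightarrow> nat set \<Rightarrow> real)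
    \<Rightarrow> ((nat \<Rightarrow> real) \<Rightarrow> nat \<Rightarrow> real) \<Rightarrow> ('a \<Rightarrow> (nat \<Rightarrow> real)) \<Rightarrow> real" where
  "comp_risk_c K c X pc loss g = (LINT x:X|lborel. Rc_integrand K c pc loss g x)"

definition mcl_risk :: "nat \<Rightarrow> 'a::euclidean_space set \<Rightarrow> (nat \<Rightarrow> real)
    \<Rightarrow> (nat \<Rightarrow> 'a \<Rightarrow> nat set \<Rightarrow> real)
    \<Rightarrow> ((nat \<Rightarrow> real) \<Rightarrow> nat \<Rightarrow> real) \<Rightarrow> ('a \<Rightarrow> (nat \<Rightarrow> real)) \<Rightarrow> real" where
  "mcl_risk K X \<alpha> pbar loss g = (\<Sum>c\<in>{1..K-1}. \<alpha> c * comp_risk_c K c X (pbar c) loss g)"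

end

theory Submission
  imports Defs
begin

text \<open>For fixed x, write the complementary loss as a sum over pairs (Y, y) with y \<notin> Y and
  exchange the order of summation. For a fixed label y the c-sets avoiding y are the c-subsets
  of the remaining K - 1 labels; each other label lies in (K-2 choose c-1) of them, so the
  coefficient of loss y collapses to (K-1 choose c), which cancels the normalization of
  pbar_c. Hence every R_c has the integrand of R on X.\<close>

lemma card_subsets_containing:
  assumes "finite T" "y \<in> T"
  shows "card {Y. Y \<subseteq> T \<and> card Y = Suc k \<and> y \<in> Y} = (card T - 1) choose k"
proof -
  have "bij_betw (\<lambda>Y. Y - {y}) {Y. Y \<subseteq> T \<and> card Y = Suc k \<and> y \<in> Y}
      {B. B \<subseteq> T - {y} \<and> card B = k}"
  proof (rule bij_betw_byWitness[where f' = "insert y"])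
    show "insert y ` {B. B \<subseteq> T - {y} \<and> card B = k} \<subseteq> {Y. Y \<subseteq> T \<and> card Y = Suc k \<and> y \<in> Y}"
      using assms by (auto simp: card_insert_if finite_subset)
  qed (use assms in \<open>auto simp: card_Diff_singleton intro: finite_subset\<close>)
  then have "card {Y. Y \<subseteq> T \<and> card Y = Suc k \<and> y \<in> Y} = card {B. B \<subseteq> T - {y} \<and> card B = k}"
    by (rule bij_betw_same_card)
  with assms show ?thesis
    by (simp add: n_subsets)
qed

lemma sum_sum_subsets:
  fixes f :: "'a \<Rightarrow> 'b::comm_semiring_1"
  assumes "finite T"
  shows "(\<Sum>Y\<in>{Y. Y \<subseteq> T \<and> card Y = Suc k}. \<Sum>y\<in>Y. f y)
       = of_nat ((card T - 1) choose k) * (\<Sum>y\<in>T. f y)"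
proof -
  let ?F = "{Y. Y \<subseteq> T \<and> card Y = Suc k}"
  have "(\<Sum>Y\<in>?F. \<Sum>y\<in>Y. f y) = (\<Sum>Y\<in>?F. \<Sum>y\<in>{y\<in>T. y \<in> Y}. f y)"
    by (intro sum.cong) auto
  also have "\<dots> = (\<Sum>y\<in>T. \<Sum>Y\<in>{Y\<in>?F. y \<in> Y}. f y)"
    using assms by (intro sum.swap_restrict) auto
  also have "\<dots> = (\<Sum>y\<in>T. of_nat ((card T - 1) choose k) * f y)"
  proof (rule sum.cong)
    fix y assume "y \<in> T"
    then have "card {Y\<in>?F. y \<in> Y} = (card T - 1) choose k"
      using card_subsets_containing[OF assms] by (simp add: conj_assoc)
    then show "(\<Sum>Y\<in>{Y\<in>?F. y \<in> Y}. f y) = of_nat ((card T - 1) choose k) * f y"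
      by simp
  qed simp
  finally show ?thesis
    by (simp add: sum_distrib_left)
qed

lemma sum_mult_sum_complement_swap:
  fixes G :: "'a set \<Rightarrow> 'b::comm_semiring_1"
  assumes "finite S" "finite F" "\<And>Y. Y \<in> F \<Longrightarrow> Y \<subseteq> S"
  shows "(\<Sum>Y\<in>F. G Y * (\<Sum>y\<in>S - Y. p y)) = (\<Sum>y\<in>S. p y * (\<Sum>Y\<in>{Y\<in>F. y \<notin> Y}. G Y))"
proof -
  have "(\<Sum>Y\<in>F. G Y * (\<Sum>y\<in>S - Y. p y)) = (\<Sum>Y\<in>F. \<Sum>y\<in>{y\<in>S. y \<notin> Y}. G Y * p y)"
    by (intro sum.cong) (auto simp: sum_distrib_left set_diff_eq)
  also have "\<dots> = (\<Sum>y\<in>S. \<Sum>Y\<in>{Y\<in>F. y \<notin> Y}. G Y * p y)"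
    using assms by (intro sum.swap_restrict) auto
  finally show ?thesis
    by (simp add: sum_distrib_left mult.commute)
qed

lemma sum_complementary_loss_avoiding:
  fixes l :: "'a \<Rightarrow> real"
  assumes "finite S" "y \<in> S" "1 \<le> c" "c < card S"
  shows "(\<Sum>Y\<in>{Y. Y \<subseteq> S \<and> card Y = c \<and> y \<notin> Y}.
            (\<Sum>z\<in>S. l z) - real (card S - 1) / real c * (\<Sum>z\<in>Y. l z))
       = real ((card S - 1) choose c) * l y"
proof -
  let ?n = "card S - 1" and ?L = "\<Sum>z\<in>S. l z" and ?r = "real (card S - 1) / real c"
  let ?F = "{Y. Y \<subseteq> S - {y} \<and> card Y = c}"
  obtain k where c: "c = Suc k"
    using assms(3) by (cases c) auto
  have T: "finite (S - {y})" "card (S - {y}) = ?n"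
    using assms by auto
  have avoiding: "{Y. Y \<subseteq> S \<and> card Y = c \<and> y \<notin> Y} = ?F"
    by auto
  have "c * (?n choose c) = ?n * ((?n - 1) choose k)"
    using binomial_absorption[of k ?n] by (simp only: c)
  then have "real c * real (?n choose c) = real ?n * real ((?n - 1) choose k)"
    by (metis of_nat_mult)
  then have absorption: "?r * real ((?n - 1) choose k) = real (?n choose c)"
    using assms(3) by (simp add: field_simps)
  have "(\<Sum>Y\<in>?F. ?L - ?r * (\<Sum>z\<in>Y. l z))
      = real (card ?F) * ?L - ?r * (\<Sum>Y\<in>?F. \<Sum>z\<in>Y. l z)"
    by (simp add: sum_subtractf sum_distrib_left)
  also have "\<dots> = real (?n choose c) * ?L - ?r * (real ((?n - 1) choose k) * (?L - l y))"
    using T assms(1,2) sum_sum_subsets[OF T(1), of l k] by (simp add: c n_subsets sum_diff1)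
  also have "\<dots> = real (?n choose c) * l y"
    by (simp only: mult.assoc[symmetric] absorption) (simp add: algebra_simps)
  finally show ?thesis
    by (simp only: avoiding)
qed

lemma complementary_loss_unbiased:
  fixes l p :: "'a \<Rightarrow> real"
  assumes "finite S" "1 \<le> c" "c < card S"
  shows "(\<Sum>Y\<in>{Y. Y \<subseteq> S \<and> card Y = c}.
            ((\<Sum>y\<in>S. l y) - real (card S - 1) / real c * (\<Sum>y\<in>Y. l y))
              * (1 / real ((card S - 1) choose c) * (\<Sum>y\<in>S - Y. p y)))
       = (\<Sum>y\<in>S. l y * p y)"
proof -
  let ?F = "{Y. Y \<subseteq> S \<and> card Y = c}" and ?N = "real ((card S - 1) choose c)"
  let ?G = "\<lambda>Y. (\<Sum>y\<in>S. l y) - real (card S - 1) / real c * (\<Sum>y\<in>Y. l y)"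
  have "(\<Sum>Y\<in>?F. ?G Y * (\<Sum>y\<in>S - Y. p y)) = (\<Sum>y\<in>S. p y * (\<Sum>Y\<in>{Y\<in>?F. y \<notin> Y}. ?G Y))"
    using assms(1) by (intro sum_mult_sum_complement_swap) auto
  also have "\<dots> = (\<Sum>y\<in>S. p y * (?N * l y))"
    using sum_complementary_loss_avoiding[OF assms(1) _ assms(2,3)]
    by (intro sum.cong) (simp_all add: conj_assoc)
  also have "\<dots> = ?N * (\<Sum>y\<in>S. l y * p y)"
    by (subst sum_distrib_left) (simp add: mult_ac)
  finally have swapped: "(\<Sum>Y\<in>?F. ?G Y * (\<Sum>y\<in>S - Y. p y)) = ?N * (\<Sum>y\<in>S. l y * p y)" .
  have "?N > 0"
    using assms(3) by simp
  have "(\<Sum>Y\<in>?F. ?G Y * (1 / ?N * (\<Sum>y\<in>S - Y. p y)))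
      = 1 / ?N * (\<Sum>Y\<in>?F. ?G Y * (\<Sum>y\<in>S - Y. p y))"
    by (simp add: sum_distrib_left mult_ac)
  also have "\<dots> = (\<Sum>y\<in>S. l y * p y)"
    using swapped \<open>?N > 0\<close> by simp
  finally show ?thesis .
qed

theorem theorem1:
  fixes K :: nat and X :: "'a::euclidean_space set"
    and p :: "'a \<Rightarrow> nat \<Rightarrow> real"
    and pbar :: "nat \<Rightarrow> 'a \<Rightarrow> nat set \<Rightarrow> real"
    and \<alpha> :: "nat \<Rightarrow> real"
    and loss :: "(nat \<Rightarrow> real) \<Rightarrow> nat \<Rightarrow> real"
    and g :: "'a \<Rightarrow> (nat \<Rightarrow> real)"
  assumes K2: "K \<ge> 2"
    and X_meas: "X \<in> sets lborel"
    and p_nonneg: "\<And>x y. x \<in> X \<Longrightarrow> y \<in> labels K \<Longrightarrow> p x y \<ge> 0"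
    and p_int: "\<And>y. y \<in> labels K \<Longrightarrow> set_integrable lborel X (\<lambda>x. p x y)"
    and p_total: "(\<Sum>y\<in>labels K. LINT x:X|lborel. p x y) = 1"
    and pbar_def: "\<And>c x Y. c \<in> {1..K-1} \<Longrightarrow> x \<in> X \<Longrightarrow> Y \<in> compl_sets K c \<Longrightarrow>
        pbar c x Y = (1 / real (K - 1 choose c)) * (\<Sum>y\<in>labels K - Y. p x y)"
    and \<alpha>_nonneg: "\<And>c. c \<in> {1..K-1} \<Longrightarrow> \<alpha> c \<ge> 0"
    and \<alpha>_sum: "(\<Sum>c\<in>{1..K-1}. \<alpha> c) = 1"
    and lossnn: "\<And>v y. loss v y \<ge> 0"
    and R_finite: "set_integrable lborel X (\<lambda>x. \<Sum>y\<in>labels K. loss (g x) y * p x y)"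
    and Rc_finite: "\<And>c. c \<in> {1..K-1} \<Longrightarrow> set_integrable lborel X (Rc_integrand K c (pbar c) loss g)"
  shows "mcl_risk K X \<alpha> pbar loss g = class_risk K X p loss g"
proof -
  have labels: "finite (labels K)" "card (labels K) = K"
    by (simp_all add: labels_def)
  have integrand_eq: "Rc_integrand K c (pbar c) loss g x = (\<Sum>y\<in>labels K. loss (g x) y * p x y)"
    if c: "c \<in> {1..K-1}" and x: "x \<in> X" for c x
  proof -
    have "Rc_integrand K c (pbar c) loss g x = (\<Sum>Y\<in>{Y. Y \<subseteq> labels K \<and> card Y = c}.
        ((\<Sum>y\<in>labels K. loss (g x) y) - real (K - 1) / real c * (\<Sum>y\<in>Y. loss (g x) y))
          * (1 / real ((K - 1) choose c) * (\<Sum>y\<in>labels K - Y. p x y)))"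
      unfolding Rc_integrand_def cum_loss_def
      by (intro sum.cong) (auto simp: pbar_def[OF c x] compl_sets_def)
    also have "\<dots> = (\<Sum>y\<in>labels K. loss (g x) y * p x y)"
      by (rule complementary_loss_unbiased[OF labels(1), unfolded labels(2)]) (use c K2 in auto)
    finally show ?thesis .
  qed
  have "comp_risk_c K c X (pbar c) loss g = class_risk K X p loss g" if "c \<in> {1..K-1}" for c
    unfolding comp_risk_c_def class_risk_def
    using integrand_eq[OF that] by (intro set_lebesgue_integral_cong[OF X_meas]) auto
  then have "mcl_risk K X \<alpha> pbar loss g = (\<Sum>c\<in>{1..K-1}. \<alpha> c) * class_risk K X p loss g"
    unfolding mcl_risk_def by (simp add: sum_distrib_right)
  with \<alpha>_sum show ?thesis
    by simp
qed

end
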